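(* Let $m\ge 2$ be an integer and let $\mathcal{A}\subset\mathbb{R}$ be a finite alphabet. Let $(X^{(j)}_i)_{i\ge 1,\,1\le j\le m}$ be independent and identically distributed random variables with values in $\mathcal{A}$. Let $S:\mathcal{A}^m\to[0,\infty)$ be a function that is not identically zero, is invariant under permutations of its $m$ arguments, satisfies $\sup_{x\in\mathcal{A}^m}S(x)<\infty$, and for which there is a constant $D>0$ such that $|S(x)-S(y)|\le D$ whenever $x,y\in\mathcal{A}^m$ differ in at most one coordinate. For $q=(q_1,\dots,q_m)$ in the domain $Q:=\{q\in(0,\infty)^m:\ q_1+\cdots+q_m=m\}$ let $$\widetilde{\gamma}^*(q):=\lim_{n\to\infty}\frac1n\,\mathbb{E}\Big(L\big(X^{(1)}_1\cdots X^{(1)}_{\lceil nq_1\rceil};\ \cdots;\ X^{(m)}_1\cdots X^{(m)}_{\lceil nq_m\rceil}\big)\Big).$$ Then $\widetilde{\gamma}^*$ is concave on $Q$. In particular, $\widetilde{\gamma}^*$ attains its maximum over $Q$ at $q_1=\cdots=q_m=1$.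
   Context: Alignments and optimal score: for finite words $w^{(1)},\dots,w^{(m)}$ over $\mathcal{A}$ of lengths $\ell_1,\dots,\ell_m$, an alignment is a choice of an integer $k\ge 0$ and, for each $j$, indices $1\le \pi^{(j)}_1<\cdots<\pi^{(j)}_k\le \ell_j$; its score is $\sum_{i=1}^k S(w^{(1)}_{\pi^{(1)}_i},\dots,w^{(m)}_{\pi^{(m)}_i})$. The optimal score $L(w^{(1)};\dots;w^{(m)})$ is the maximum score over all alignments. The limit defining $\widetilde{\gamma}^*$ exists (by superadditivity). *)

theory Defs
  imports "HOL-Probability.Probability"
begin

definition alignments :: "nat \<Rightarrow> (nat \<Rightarrow> real list) \<Rightarrow> (nat \<times> (nat \<Rightarrow> nat \<Rightarrow> nat)) set" where
  "alignments m w = {(k, \<pi>). \<forall>j<m. strict_mono_on {..<k} (\<pi> j) \<and> (\<forall>i<k. \<pi> j i < length (w j))}"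

definition align_score :: "(real list \<Rightarrow> real) \<Rightarrow> nat \<Rightarrow> (nat \<Rightarrow> real list)
    \<Rightarrow> nat \<times> (nat \<Rightarrow> nat \<Rightarrow> nat) \<Rightarrow> real" where
  "align_score S m w a = (\<Sum>i<fst a. S (map (\<lambda>j. w j ! (snd a j i)) [0..<m]))"

definition opt_score :: "(real list \<Rightarrow> real) \<Rightarrow> nat \<Rightarrow> (nat \<Rightarrow> real list) \<Rightarrow> real" where
  "opt_score S m w = Max (align_score S m w ` alignments m w)"

definition Qdom :: "nat \<Rightarrow> (nat \<Rightarrow> real) set" where
  "Qdom m = {q. (\<forall>j<m. 0 < q j) \<and> (\<Sum>j<m. q j) = real m}"

text \<open>gamma tilde star (q) = lim (1/n) E L(X^(1)_1..X^(1)_{ceil(n q_1)}; ...).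
  Random variables are indexed X j i, j<m, i 0-based.\<close>
definition gamma_tilde :: "'a measure \<Rightarrow> (nat \<Rightarrow> nat \<Rightarrow> 'a \<Rightarrow> real) \<Rightarrow> (real list \<Rightarrow> real)
    \<Rightarrow> nat \<Rightarrow> (nat \<Rightarrow> real) \<Rightarrow> real" where
  "gamma_tilde M X S m q = lim (\<lambda>n. (integral\<^sup>L M (\<lambda>\<omega>.
      opt_score S m (\<lambda>j. map (\<lambda>i. X j i \<omega>) [0..<nat \<lceil>real n * q j\<rceil>]))) / real n)"

end

theory Submission
  imports Defs
begin

text \<open>
  The expected optimal score \<open>E(l)\<close> of words of lengths \<open>l = (l\<^sub>1, \<dots>, l\<^sub>m)\<close> is superadditive
  in \<open>l\<close> (concatenate optimal alignments of two independent blocks, which have the same law by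
  independence), changes by at most \<open>d B\<close> when each length grows by \<open>d\<close>, and is invariant under
  cyclic rotation of the words (symmetry of \<open>S\<close> and identical distribution).
  Fekete's lemma then makes \<open>\<gamma>(q) = lim E(\<lceil>n q\<rceil>) / n\<close> exist, and the growth bound lets \<open>n\<close>
  run through the reals, so \<open>\<gamma>\<close> is positively homogeneous and superadditive, hence concave.
  Averaging \<open>q\<close> over its \<open>m\<close> rotations gives the constant vector \<open>1\<close>, which is therefore a
  maximiser on \<open>Q\<close>.
\<close>

lemma nat_ceiling_add_le:
  fixes x y :: real
  assumes "0 \<le> x" "0 \<le> y"
  shows "nat \<lceil>x\<rceil> + nat \<lceil>y\<rceil> \<le> nat \<lceil>x + y\<rceil> + 1"
proof -
  have "real_of_int \<lceil>x\<rceil> + real_of_int \<lceil>y\<rceil> < real_of_int \<lceil>x + y\<rceil> + 2"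
    using ceiling_correct[of x] ceiling_correct[of y] le_of_int_ceiling[of "x + y"] by linarith
  then have "\<lceil>x\<rceil> + \<lceil>y\<rceil> \<le> \<lceil>x + y\<rceil> + 1" by linarith
  then show ?thesis using assms by linarith
qed

lemma bij_betw_rotate:
  assumes "0 < (m::nat)"
  shows "bij_betw (\<lambda>k. (j + k) mod m) {..<m} {..<m}"
proof -
  have eq: "x = y" if "x \<le> y" "y < m" "(j + x) mod m = (j + y) mod m" for x y
  proof -
    have "m dvd y - x" using that mod_eq_dvd_iff_nat[of "j + x" "j + y" m] by simp
    then show "x = y" using that by (cases "y - x = 0") (auto dest: dvd_imp_le)
  qed
  have "inj_on (\<lambda>k. (j + k) mod m) {..<m}"
  proof (rule inj_onI)
    fix x y assume "x \<in> {..<m}" "y \<in> {..<m}" "(j + x) mod m = (j + y) mod m"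
    then show "x = y" using eq[of x y] eq[of y x] by (cases "x \<le> y") auto
  qed
  moreover have "(\<lambda>k. (j + k) mod m) ` {..<m} \<subseteq> {..<m}" using assms by auto
  ultimately show ?thesis
    by (simp add: bij_betw_def card_subset_eq card_image)
qed
lemma sum_lessThan_add:
  fixes f :: "nat \<Rightarrow> 'a::comm_monoid_add"
  shows "(\<Sum>i<a + b. f i) = (\<Sum>i<a. f i) + (\<Sum>i<b. f (a + i))"
  by (induction b) (simp_all add: add.assoc)

lemma map_upt_add: "map f [0..<a + b] = map f [0..<a] @ map (\<lambda>i. f (a + i)) [0..<b]"
  by (induction b) auto

section \<open>Fekete's lemma\<close>

lemma superadditive_mult_le:
  fixes b :: "nat \<Rightarrow> real"
  assumes superadd: "\<And>n k. b n + b k \<le> b (n + k)"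
  shows "real q * b p + b r \<le> b (q * p + r)"
proof (induction q)
  case (Suc q)
  have "real (Suc q) * b p + b r = b p + (real q * b p + b r)" by (simp add: algebra_simps)
  also have "\<dots> \<le> b p + b (q * p + r)" using Suc by simp
  also have "\<dots> \<le> b (Suc q * p + r)" using superadd[of p "q * p + r"] by (simp add: add.assoc)
  finally show ?case .
qed simp

\<comment> \<open>Writing \<open>n = q p + r\<close> with \<open>r < p\<close> gives \<open>b n \<ge> q b p + b r\<close>; the error term absorbs the remainder.\<close>
lemma superadditive_div_lower_bound:
  fixes b :: "nat \<Rightarrow> real"
  assumes superadd: "\<And>n k. b n + b k \<le> b (n + k)" and "1 \<le> p" "1 \<le> n"
  shows "b p / real p - (\<bar>b p\<bar> + (\<Sum>r<p. \<bar>b r\<bar>)) / real n \<le> b n / real n"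
proof -
  define q r where "q = n div p" and "r = n mod p"
  have n: "n = q * p + r" and "r < p" using \<open>1 \<le> p\<close> by (simp_all add: q_def r_def)
  have "\<bar>b r\<bar> \<le> (\<Sum>r<p. \<bar>b r\<bar>)"
    using \<open>r < p\<close> by (intro member_le_sum) auto
  moreover have "real r / real p * b p \<le> real r / real p * \<bar>b p\<bar>"
    by (intro mult_left_mono) auto
  moreover have "real r / real p * \<bar>b p\<bar> \<le> \<bar>b p\<bar>"
    using \<open>r < p\<close> by (intro mult_left_le_one_le) auto
  moreover have "real n * (b p / real p) = real q * b p + real r / real p * b p"
    using n \<open>1 \<le> p\<close> by (simp add: field_simps)
  ultimately have "real n * (b p / real p) - (\<bar>b p\<bar> + (\<Sum>r<p. \<bar>b r\<bar>)) \<le> real q * b p + b r"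
    using abs_ge_minus_self[of "b r"] by argo
  also have "\<dots> \<le> b n" using superadditive_mult_le[OF superadd] n by simp
  finally have "(real n * (b p / real p) - (\<bar>b p\<bar> + (\<Sum>r<p. \<bar>b r\<bar>))) / real n \<le> b n / real n"
    by (rule divide_right_mono) simp
  then show ?thesis using \<open>1 \<le> n\<close> by (simp add: diff_divide_distrib)
qed

lemma fekete_superadditive:
  fixes b :: "nat \<Rightarrow> real"
  assumes superadd: "\<And>n k. b n + b k \<le> b (n + k)"
    and linear_bound: "\<And>n. b n \<le> C * real n"
  shows "(\<lambda>n. b n / real n) \<longlonglongrightarrow> (SUP n\<in>{1..}. b n / real n)"
proof -
  let ?s = "SUP n\<in>{1..}. b n / real n"
  have bdd: "bdd_above ((\<lambda>n. b n / real n) ` {1..})"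
    using linear_bound by (intro bdd_aboveI[of _ C]) (auto simp: divide_simps)
  show ?thesis
  proof (rule order_tendstoI)
    fix a assume "a < ?s"
    then obtain p where p: "p \<ge> 1" "a < b p / real p"
      using less_cSUP_iff[OF _ bdd, of a] by auto
    define K where "K = \<bar>b p\<bar> + (\<Sum>r<p. \<bar>b r\<bar>)"
    have "eventually (\<lambda>n. K / real n < b p / real p - a) sequentially"
      using p(2) lim_const_over_n[of K] by (simp add: order_tendsto_iff)
    then show "eventually (\<lambda>n. a < b n / real n) sequentially"
      using eventually_ge_at_top[of 1] unfolding K_def
      by eventually_elim (use superadditive_div_lower_bound[OF superadd p(1)] in fastforce)
  next
    fix a assume "?s < a"
    have "b n / real n < a" if "n \<ge> 1" for n
    proof -
      have "b n / real n \<le> ?s" by (rule cSUP_upper[OF _ bdd]) (use that in simp)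
      then show ?thesis using \<open>?s < a\<close> by linarith
    qed
    then show "eventually (\<lambda>n. b n / real n < a) sequentially"
      by (rule eventually_sequentiallyI)
  qed
qed

section \<open>Growth rate of a superadditive length functional\<close>

\<comment> \<open>\<open>F l\<close> stands for the expected optimal score of words of lengths \<open>l\<close>; \<open>rate\<close> is then \<open>\<gamma>\<close>.\<close>
locale length_functional =
  fixes m :: nat and F :: "(nat \<Rightarrow> nat) \<Rightarrow> real" and B :: real
  assumes m_pos: "0 < m" and B_nonneg: "0 \<le> B"
    and F_cong: "\<And>l l'. (\<And>j. j < m \<Longrightarrow> l j = l' j) \<Longrightarrow> F l = F l'"
    and F_superadd: "\<And>l l'. F l + F l' \<le> F (\<lambda>j. l j + l' j)"
    and F_extend_le: "\<And>l l' d. (\<And>j. j < m \<Longrightarrow> l' j \<le> l j + d) \<Longrightarrow> F l' \<le> F l + real d * B"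
    and F_nonneg: "\<And>l. 0 \<le> F l"
    and F_le_first: "\<And>l. F l \<le> B * real (l 0)"
    and F_rotate: "\<And>l. F (\<lambda>j. l ((j + 1) mod m)) = F l"
begin

definition nonneg :: "(nat \<Rightarrow> real) \<Rightarrow> bool"
  where "nonneg q \<longleftrightarrow> (\<forall>j<m. 0 \<le> q j)"

definition F_ceil :: "(nat \<Rightarrow> real) \<Rightarrow> real"
  where "F_ceil u = F (\<lambda>j. nat \<lceil>u j\<rceil>)"

definition rate :: "(nat \<Rightarrow> real) \<Rightarrow> real"
  where "rate q = lim (\<lambda>n. F_ceil (\<lambda>j. real n * q j) / real n)"

lemma nonneg_scale: "nonneg q \<Longrightarrow> 0 \<le> c \<Longrightarrow> nonneg (\<lambda>j. c * q j)"
  unfolding nonneg_def by simp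

lemma nonneg_add: "nonneg q \<Longrightarrow> nonneg r \<Longrightarrow> nonneg (\<lambda>j. q j + r j)"
  unfolding nonneg_def by simp

lemma F_ceil_nonneg: "0 \<le> F_ceil u"
  unfolding F_ceil_def by (rule F_nonneg)

lemma F_ceil_superadd:
  assumes "nonneg u" "nonneg v"
  shows "F_ceil u + F_ceil v \<le> F_ceil (\<lambda>j. u j + v j) + B"
proof -
  have "F_ceil u + F_ceil v \<le> F (\<lambda>j. nat \<lceil>u j\<rceil> + nat \<lceil>v j\<rceil>)"
    unfolding F_ceil_def by (rule F_superadd)
  also have "\<dots> \<le> F_ceil (\<lambda>j. u j + v j) + real 1 * B"
    unfolding F_ceil_def using assms
    by (intro F_extend_le nat_ceiling_add_le) (auto simp: nonneg_def)
  finally show ?thesis by simp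
qed

lemma F_ceil_extend_le:
  assumes "nonneg u" and "\<And>j. j < m \<Longrightarrow> v j \<le> u j + real d"
  shows "F_ceil v \<le> F_ceil u + real d * B"
  unfolding F_ceil_def
proof (rule F_extend_le)
  fix j assume "j < m"
  then have "0 \<le> u j" "\<lceil>v j\<rceil> \<le> \<lceil>u j + real d\<rceil>"
    using assms by (auto simp: nonneg_def intro: ceiling_mono)
  then show "nat \<lceil>v j\<rceil> \<le> nat \<lceil>u j\<rceil> + d" by linarith
qed

lemma F_ceil_mono:
  assumes "nonneg u" and "\<And>j. j < m \<Longrightarrow> v j \<le> u j"
  shows "F_ceil v \<le> F_ceil u"
  using F_ceil_extend_le[of u v 0] assms by simp

lemma F_ceil_le_first:
  assumes "0 \<le> u 0"
  shows "F_ceil u \<le> B * (u 0 + 1)"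
proof -
  have "real (nat \<lceil>u 0\<rceil>) \<le> u 0 + 1"
    using assms ceiling_correct[of "u 0"] by linarith
  then show ?thesis
    unfolding F_ceil_def using F_le_first[of "\<lambda>j. nat \<lceil>u j\<rceil>"] B_nonneg
    by (smt (verit) mult_left_mono)
qed

lemma F_ceil_tendsto_rate:
  assumes q: "nonneg q"
  shows "(\<lambda>n. F_ceil (\<lambda>j. real n * q j) / real n) \<longlonglongrightarrow> rate q"
proof -
  \<comment> \<open>Rounding up costs at most one letter per word, which the shift by \<open>B\<close> absorbs.\<close>
  define b where "b n = F_ceil (\<lambda>j. real n * q j) - B" for n
  have "(\<lambda>n. b n / real n) \<longlonglongrightarrow> (SUP n\<in>{1..}. b n / real n)"
  proof (rule fekete_superadditive)
    fix n k
    have "(\<lambda>j. real n * q j + real k * q j) = (\<lambda>j. real (n + k) * q j)"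
      by (simp add: algebra_simps)
    then show "b n + b k \<le> b (n + k)"
      using F_ceil_superadd[OF nonneg_scale[OF q] nonneg_scale[OF q], of "real n" "real k"]
      unfolding b_def by simp
    have "0 \<le> q 0" using q m_pos by (simp add: nonneg_def)
    then show "b n \<le> (B * q 0) * real n"
      using F_ceil_le_first[of "\<lambda>j. real n * q j"] unfolding b_def by (simp add: algebra_simps)
  qed
  then have "(\<lambda>n. b n / real n + B / real n) \<longlonglongrightarrow> (SUP n\<in>{1..}. b n / real n) + 0"
    by (intro tendsto_add lim_const_over_n)
  moreover have "b n / real n + B / real n = F_ceil (\<lambda>j. real n * q j) / real n" for n
    unfolding b_def by (simp add: diff_divide_distrib)
  ultimately show ?thesis
    unfolding rate_def by (simp add: limI)
qed

\<comment> \<open>Between \<open>\<lfloor>x\<rfloor>\<close> and \<open>x\<close> each coordinate grows by less than \<open>d\<close>, so \<open>F_ceil\<close> grows by at most \<open>d B\<close>.\<close>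
lemma F_ceil_floor_sandwich:
  assumes q: "nonneg q" and qd: "\<And>j. j < m \<Longrightarrow> q j \<le> real d" and x: "1 \<le> x"
  defines "k \<equiv> nat \<lfloor>x\<rfloor>"
  shows "F_ceil (\<lambda>j. real k * q j) / (real k + 1) \<le> F_ceil (\<lambda>j. x * q j) / x"
    and "F_ceil (\<lambda>j. x * q j) / x \<le> (F_ceil (\<lambda>j. real k * q j) + real d * B) / real k"
proof -
  have kx: "1 \<le> real k" "real k \<le> x" "x < real k + 1"
    using x floor_correct[of x] by (auto simp: k_def le_nat_floor)
  have "F_ceil (\<lambda>j. real k * q j) \<le> F_ceil (\<lambda>j. x * q j)"
    using q kx by (intro F_ceil_mono nonneg_scale mult_right_mono) (auto simp: nonneg_def)
  moreover have "F_ceil (\<lambda>j. x * q j) \<le> F_ceil (\<lambda>j. real k * q j) + real d * B"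
  proof (rule F_ceil_extend_le[OF nonneg_scale[OF q]])
    fix j assume "j < m"
    then have "0 \<le> q j" "q j \<le> real d" using q qd by (auto simp: nonneg_def)
    then have "x * q j \<le> (real k + 1) * q j" using kx by (intro mult_right_mono) auto
    then show "x * q j \<le> real k * q j + real d" using \<open>q j \<le> real d\<close> by (simp add: algebra_simps)
  qed simp
  moreover have "0 \<le> F_ceil (\<lambda>j. real k * q j)" by (rule F_ceil_nonneg)
  ultimately show "F_ceil (\<lambda>j. real k * q j) / (real k + 1) \<le> F_ceil (\<lambda>j. x * q j) / x"
    and "F_ceil (\<lambda>j. x * q j) / x \<le> (F_ceil (\<lambda>j. real k * q j) + real d * B) / real k"
    using kx by (auto intro!: frac_le)
qed

lemma F_ceil_tendsto_rate_at_top: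
  assumes q: "nonneg q"
  shows "((\<lambda>x. F_ceil (\<lambda>j. x * q j) / x) \<longlongrightarrow> rate q) at_top"
proof -
  define a where "a n = F_ceil (\<lambda>j. real n * q j)" for n
  define d where "d = (\<Sum>j<m. nat \<lceil>q j\<rceil>)"
  have qd: "q j \<le> real d" if "j < m" for j
  proof -
    have "nat \<lceil>q j\<rceil> \<le> d" unfolding d_def using that by (intro member_le_sum) auto
    then show ?thesis by linarith
  qed
  have lim_a: "(\<lambda>n. a n / real n) \<longlonglongrightarrow> rate q"
    unfolding a_def by (rule F_ceil_tendsto_rate[OF q])
  have "(\<lambda>n. a n / real n * (real n / real (Suc n))) \<longlonglongrightarrow> rate q * 1"
    by (intro tendsto_mult lim_a LIMSEQ_n_over_Suc_n)
  moreover have "eventually (\<lambda>n. a n / real n * (real n / real (Suc n)) = a n / (real n + 1)) sequentially"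
    using eventually_ge_at_top[of 1] by eventually_elim simp
  ultimately have lower: "(\<lambda>n. a n / (real n + 1)) \<longlonglongrightarrow> rate q"
    by (simp add: tendsto_cong)
  have "(\<lambda>n. a n / real n + real d * B / real n) \<longlonglongrightarrow> rate q + 0"
    by (intro tendsto_add lim_a lim_const_over_n)
  then have upper: "(\<lambda>n. (a n + real d * B) / real n) \<longlonglongrightarrow> rate q"
    by (simp add: add_divide_distrib)
  have floor_lim: "filterlim (\<lambda>x. nat \<lfloor>x\<rfloor>) sequentially (at_top :: real filter)"
    by (rule filterlim_compose[OF filterlim_nat_sequentially filterlim_floor_sequentially])
  show ?thesis
  proof (rule tendsto_sandwich[OF _ _ filterlim_compose[OF lower floor_lim] filterlim_compose[OF upper floor_lim]])
    show "eventually (\<lambda>x. a (nat \<lfloor>x\<rfloor>) / (real (nat \<lfloor>x\<rfloor>) + 1) \<le> F_ceil (\<lambda>j. x * q j) / x) at_top"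
      unfolding a_def using eventually_ge_at_top[of "1::real"]
      by (rule eventually_mono) (rule F_ceil_floor_sandwich(1)[OF q qd])
    show "eventually (\<lambda>x. F_ceil (\<lambda>j. x * q j) / x \<le> (a (nat \<lfloor>x\<rfloor>) + real d * B) / real (nat \<lfloor>x\<rfloor>)) at_top"
      unfolding a_def using eventually_ge_at_top[of "1::real"]
      by (rule eventually_mono) (rule F_ceil_floor_sandwich(2)[OF q qd])
  qed
qed

lemma rate_scale:
  assumes q: "nonneg q" and c: "0 < c"
  shows "rate (\<lambda>j. c * q j) = c * rate q"
proof -
  have "filterlim (\<lambda>n. real n * c) at_top sequentially"
    by (rule filterlim_at_top_mult_tendsto_pos[OF tendsto_const c filterlim_real_sequentially])
  from filterlim_compose[OF F_ceil_tendsto_rate_at_top[OF q] this]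
  have "(\<lambda>n. c * (F_ceil (\<lambda>j. (real n * c) * q j) / (real n * c))) \<longlonglongrightarrow> c * rate q"
    by (rule tendsto_mult_left)
  moreover have "eventually (\<lambda>n. c * (F_ceil (\<lambda>j. (real n * c) * q j) / (real n * c))
      = F_ceil (\<lambda>j. real n * (c * q j)) / real n) sequentially"
    using eventually_ge_at_top[of 1] by eventually_elim (use c in \<open>simp add: mult.assoc field_simps\<close>)
  ultimately have "(\<lambda>n. F_ceil (\<lambda>j. real n * (c * q j)) / real n) \<longlonglongrightarrow> c * rate q"
    by (rule Lim_transform_eventually)
  with F_ceil_tendsto_rate[OF nonneg_scale[OF q less_imp_le[OF c]]] show ?thesis
    by (rule LIMSEQ_unique)
qed

lemma rate_superadd:
  assumes q: "nonneg q" and r: "nonneg r"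
  shows "rate q + rate r \<le> rate (\<lambda>j. q j + r j)"
proof -
  have "(\<lambda>n. F_ceil (\<lambda>j. real n * q j) / real n + F_ceil (\<lambda>j. real n * r j) / real n - B / real n)
      \<longlonglongrightarrow> rate q + rate r - 0" (is "?lower \<longlonglongrightarrow> _")
    by (intro tendsto_diff tendsto_add F_ceil_tendsto_rate q r lim_const_over_n)
  then have "?lower \<longlonglongrightarrow> rate q + rate r" by simp
  moreover have "(\<lambda>n. F_ceil (\<lambda>j. real n * (q j + r j)) / real n) \<longlonglongrightarrow> rate (\<lambda>j. q j + r j)"
    by (intro F_ceil_tendsto_rate nonneg_add q r)
  moreover have "F_ceil (\<lambda>j. real n * q j) + F_ceil (\<lambda>j. real n * r j) - B
      \<le> F_ceil (\<lambda>j. real n * (q j + r j))" for n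
    using F_ceil_superadd[OF nonneg_scale[OF q] nonneg_scale[OF r], of "real n" "real n"]
    by (simp add: distrib_left)
  then have "F_ceil (\<lambda>j. real n * q j) / real n + F_ceil (\<lambda>j. real n * r j) / real n - B / real n
      \<le> F_ceil (\<lambda>j. real n * (q j + r j)) / real n" for n
    by (simp add: add_divide_distrib[symmetric] diff_divide_distrib[symmetric] divide_right_mono)
  ultimately show ?thesis
    by (intro LIMSEQ_le[where X = ?lower]) auto
qed

lemma rate_cong:
  assumes "\<And>j. j < m \<Longrightarrow> q j = q' j"
  shows "rate q = rate q'"
proof -
  have "F_ceil (\<lambda>j. x * q j) = F_ceil (\<lambda>j. x * q' j)" for x
    unfolding F_ceil_def by (rule F_cong) (simp add: assms)
  then show ?thesis unfolding rate_def by simp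
qed

lemma rate_nonneg: "nonneg q \<Longrightarrow> 0 \<le> rate q"
  by (rule LIMSEQ_le_const[OF F_ceil_tendsto_rate]) (auto intro!: divide_nonneg_nonneg F_ceil_nonneg)

lemma rate_rotate1: "rate (\<lambda>j. q ((j + 1) mod m)) = rate q"
proof -
  have "F_ceil (\<lambda>j. x * q ((j + 1) mod m)) = F_ceil (\<lambda>j. x * q j)" for x
    unfolding F_ceil_def by (rule F_rotate[of "\<lambda>j. nat \<lceil>x * q j\<rceil>"])
  then show ?thesis unfolding rate_def by simp
qed

lemma rate_rotate: "rate (\<lambda>j. q ((j + k) mod m)) = rate q"
proof (induction k)
  case (Suc k)
  have "rate (\<lambda>j. q ((j + Suc k) mod m)) = rate (\<lambda>j. q ((((j + 1) mod m) + k) mod m))"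
    by (rule rate_cong) (simp add: mod_add_left_eq)
  also have "\<dots> = rate (\<lambda>j. q ((j + k) mod m))"
    by (rule rate_rotate1)
  finally show ?case using Suc by simp
qed (rule rate_cong, simp)

lemma rate_concave:
  assumes "nonneg q" "nonneg r" "0 \<le> t" "t \<le> 1"
  shows "t * rate q + (1 - t) * rate r \<le> rate (\<lambda>j. t * q j + (1 - t) * r j)"
proof (cases "t = 0 \<or> t = 1")
  case False
  then have "0 < t" "0 < 1 - t" using assms by auto
  then have "t * rate q + (1 - t) * rate r = rate (\<lambda>j. t * q j) + rate (\<lambda>j. (1 - t) * r j)"
    using assms by (simp add: rate_scale)
  also have "\<dots> \<le> rate (\<lambda>j. t * q j + (1 - t) * r j)"
    using assms by (intro rate_superadd nonneg_scale) auto
  finally show ?thesis .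
qed auto

\<comment> \<open>Summing the \<open>m\<close> cyclic rotations of \<open>q\<close> gives the constant vector \<open>m\<close>.\<close>
lemma rate_le_rate_one:
  assumes q: "nonneg q" and sum_q: "(\<Sum>j<m. q j) = real m"
  shows "rate q \<le> rate (\<lambda>_. 1)"
proof -
  define V where "V K j = (\<Sum>k<K. q ((j + k) mod m))" for K j
  have nonneg_rot: "nonneg (\<lambda>j. q ((j + k) mod m))" for k
    using q m_pos by (simp add: nonneg_def)
  have nonneg_V: "nonneg (V K)" for K
    using nonneg_rot unfolding V_def nonneg_def by (auto intro: sum_nonneg)
  have "real K * rate q \<le> rate (V K)" for K
  proof (induction K)
    case 0
    then show ?case using rate_nonneg[OF nonneg_V] by simp
  next
    case (Suc K)
    have "real (Suc K) * rate q = real K * rate q + rate (\<lambda>j. q ((j + K) mod m))"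
      by (simp add: rate_rotate algebra_simps)
    also have "\<dots> \<le> rate (V K) + rate (\<lambda>j. q ((j + K) mod m))" using Suc by simp
    also have "\<dots> \<le> rate (\<lambda>j. V K j + q ((j + K) mod m))"
      by (rule rate_superadd[OF nonneg_V nonneg_rot])
    also have "(\<lambda>j. V K j + q ((j + K) mod m)) = V (Suc K)"
      by (simp add: V_def fun_eq_iff)
    finally show ?case .
  qed
  also have "V m j = real m * 1" if "j < m" for j
    using sum.reindex_bij_betw[OF bij_betw_rotate[OF m_pos, of j], of q] sum_q
    by (simp add: V_def)
  then have "rate (V m) = real m * rate (\<lambda>_. 1)"
    using rate_scale[of "\<lambda>_. 1" "real m"] m_pos rate_cong[of "V m"] by (simp add: nonneg_def)
  finally show ?thesis using m_pos by simp
qed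

end

section \<open>Optimal alignment scores\<close>

lemma alignment_length_le:
  assumes "(k, \<pi>) \<in> alignments m w" "j < m"
  shows "k \<le> length (w j)"
proof -
  have "strict_mono_on {..<k} (\<pi> j)" "\<pi> j ` {..<k} \<subseteq> {..<length (w j)}"
    using assms unfolding alignments_def by auto
  then have "card {..<k} \<le> card {..<length (w j)}"
    by (intro card_inj_on_le strict_mono_on_imp_inj_on) auto
  then show ?thesis by simp
qed

lemma empty_alignment: "(0, \<pi>) \<in> alignments m w"
  unfolding alignments_def by (auto simp: strict_mono_on_def)

lemma alignment_column_subset:
  assumes "(k, \<pi>) \<in> alignments m w" "\<And>j. j < m \<Longrightarrow> set (w j) \<subseteq> A" "i < k"
  shows "set (map (\<lambda>j. w j ! \<pi> j i) [0..<m]) \<subseteq> A"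
proof
  fix x assume "x \<in> set (map (\<lambda>j. w j ! \<pi> j i) [0..<m])"
  then obtain j where j: "j < m" "x = w j ! \<pi> j i" by auto
  have "\<pi> j i < length (w j)" using assms(1,3) j unfolding alignments_def by auto
  then show "x \<in> A" using assms(2)[OF j(1)] j(2) nth_mem by blast
qed

\<comment> \<open>Scores only see \<open>\<pi> j i\<close> for \<open>j < m\<close>, \<open>i < k\<close>, so every alignment has the score of one in a finite set.\<close>
lemma finite_align_scores:
  assumes m: "0 < m"
  shows "finite (align_score S m w ` alignments m w)"
proof -
  define N where "N = (\<Sum>j<m. length (w j))"
  have lenN: "length (w j) \<le> N" if "j < m" for j
    unfolding N_def using that by (intro member_le_sum) auto
  define trunc where "trunc a = (fst a, \<lambda>j\<in>{..<m}. \<lambda>i\<in>{..<N}. if i < fst a then snd a j i else 0)"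
    for a :: "nat \<times> (nat \<Rightarrow> nat \<Rightarrow> nat)"
  define T where "T = {..N} \<times> PiE {..<m} (\<lambda>_. PiE {..<N} (\<lambda>_. {..N}))"
  have "align_score S m w ` alignments m w \<subseteq> align_score S m w ` T"
  proof
    fix y assume "y \<in> align_score S m w ` alignments m w"
    then obtain k \<pi> where a: "(k, \<pi>) \<in> alignments m w" and y: "y = align_score S m w (k, \<pi>)" by auto
    have kN: "k \<le> N" using alignment_length_le[OF a m] lenN[OF m] by simp
    have "\<pi> j i < length (w j)" if "j < m" "i < k" for j i
      using a that unfolding alignments_def by auto
    then have "trunc (k, \<pi>) \<in> T" unfolding trunc_def T_def
      using kN lenN by (auto simp: PiE_iff less_imp_le_nat intro: order.trans[OF less_imp_le_nat])
    moreover have "align_score S m w (trunc (k, \<pi>)) = y"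
      unfolding y align_score_def trunc_def using kN
      by (auto intro!: sum.cong arg_cong[where f=S] map_cong)
    ultimately show "y \<in> align_score S m w ` T" by (metis image_eqI)
  qed
  moreover have "finite T" unfolding T_def by (intro finite_cartesian_product finite_PiE) auto
  ultimately show ?thesis using finite_subset by blast
qed

context
  fixes S :: "real list \<Rightarrow> real" and m :: nat
  assumes m_pos: "0 < m"
begin

lemma align_score_le_opt_score: "a \<in> alignments m w \<Longrightarrow> align_score S m w a \<le> opt_score S m w"
  unfolding opt_score_def by (rule Max_ge[OF finite_align_scores[OF m_pos]]) auto

lemma opt_score_attained:
  obtains k \<pi> where "(k, \<pi>) \<in> alignments m w" "opt_score S m w = align_score S m w (k, \<pi>)"
proof -
  have "opt_score S m w \<in> align_score S m w ` alignments m w"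
    unfolding opt_score_def using empty_alignment
    by (intro Max_in[OF finite_align_scores[OF m_pos]]) auto
  then show ?thesis using that by auto
qed

lemma opt_score_nonneg: "0 \<le> opt_score S m w"
  using align_score_le_opt_score[OF empty_alignment] by (simp add: align_score_def)

end

lemma opt_score_cong:
  assumes "\<And>j. j < m \<Longrightarrow> w j = w' j"
  shows "opt_score S m w = opt_score S m w'"
proof -
  have "alignments m w = alignments m w'" unfolding alignments_def using assms by auto
  moreover have "align_score S m w a = align_score S m w' a" for a
    unfolding align_score_def using assms by (auto intro!: sum.cong arg_cong[where f=S] map_cong)
  ultimately show ?thesis unfolding opt_score_def by simp
qed

lemma opt_score_le_length:
  assumes m: "0 < m" and B: "0 \<le> B" and S_le: "\<And>x. length x = m \<Longrightarrow> set x \<subseteq> A \<Longrightarrow> S x \<le> B"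
    and wA: "\<And>j. j < m \<Longrightarrow> set (w j) \<subseteq> A"
  shows "opt_score S m w \<le> B * real (length (w 0))"
proof -
  obtain k \<pi> where a: "(k, \<pi>) \<in> alignments m w" and opt: "opt_score S m w = align_score S m w (k, \<pi>)"
    by (rule opt_score_attained[OF m])
  have "align_score S m w (k, \<pi>) \<le> (\<Sum>i<k. B)" unfolding align_score_def fst_conv snd_conv
    by (intro sum_mono S_le alignment_column_subset[OF a wA]) auto
  also have "\<dots> \<le> B * real (length (w 0))"
    using alignment_length_le[OF a m] B by (simp add: mult.commute mult_left_mono)
  finally show ?thesis using opt by simp
qed

lemma opt_score_mono_append:
  assumes m: "0 < m" and ext: "\<And>j. j < m \<Longrightarrow> w' j = w j @ e j"
  shows "opt_score S m w \<le> opt_score S m w'"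
proof -
  obtain k \<pi> where a: "(k, \<pi>) \<in> alignments m w" and opt: "opt_score S m w = align_score S m w (k, \<pi>)"
    by (rule opt_score_attained[OF m])
  have a': "(k, \<pi>) \<in> alignments m w'" using a ext unfolding alignments_def
    by (auto intro: trans_less_add1)
  have "align_score S m w (k, \<pi>) = align_score S m w' (k, \<pi>)"
    using a ext unfolding align_score_def alignments_def
    by (auto intro!: sum.cong arg_cong[where f=S] map_cong simp: nth_append)
  then show ?thesis using opt align_score_le_opt_score[OF m a'] by simp
qed

lemma alignments_append:
  assumes a1: "(k1, \<pi>1) \<in> alignments m u" and a2: "(k2, \<pi>2) \<in> alignments m v"
  shows "(k1 + k2, \<lambda>j i. if i < k1 then \<pi>1 j i else length (u j) + \<pi>2 j (i - k1))
    \<in> alignments m (\<lambda>j. u j @ v j)"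
  unfolding alignments_def
proof (simp only: mem_Collect_eq case_prod_conv, intro allI impI conjI)
  fix j assume j: "j < m"
  have sm1: "strict_mono_on {..<k1} (\<pi>1 j)" and vl1: "\<And>i. i < k1 \<Longrightarrow> \<pi>1 j i < length (u j)"
    using a1 j unfolding alignments_def by auto
  have sm2: "strict_mono_on {..<k2} (\<pi>2 j)" and vl2: "\<And>i. i < k2 \<Longrightarrow> \<pi>2 j i < length (v j)"
    using a2 j unfolding alignments_def by auto
  show "strict_mono_on {..<k1 + k2} (\<lambda>i. if i < k1 then \<pi>1 j i else length (u j) + \<pi>2 j (i - k1))"
  proof (rule strict_mono_onI)
    fix r s assume rs: "r \<in> {..<k1 + k2}" "s \<in> {..<k1 + k2}" "r < s"
    consider "s < k1" | "r < k1" "k1 \<le> s" | "k1 \<le> r" by linarith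
    then show "(if r < k1 then \<pi>1 j r else length (u j) + \<pi>2 j (r - k1))
        < (if s < k1 then \<pi>1 j s else length (u j) + \<pi>2 j (s - k1))"
    proof cases
      case 1 then show ?thesis using rs strict_mono_onD[OF sm1, of r s] by auto
    next
      case 2 then show ?thesis using vl1[of r] by auto
    next
      case 3 then show ?thesis using rs strict_mono_onD[OF sm2, of "r - k1" "s - k1"] by auto
    qed
  qed
  fix i assume "i < k1 + k2"
  then show "(if i < k1 then \<pi>1 j i else length (u j) + \<pi>2 j (i - k1)) < length (u j @ v j)"
    using vl1[of i] vl2[of "i - k1"] by auto
qed

lemma opt_score_append_superadd:
  assumes m: "0 < m"
  shows "opt_score S m u + opt_score S m v \<le> opt_score S m (\<lambda>j. u j @ v j)"
proof -
  obtain k1 \<pi>1 where a1: "(k1, \<pi>1) \<in> alignments m u" and o1: "opt_score S m u = align_score S m u (k1, \<pi>1)"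
    by (rule opt_score_attained[OF m])
  obtain k2 \<pi>2 where a2: "(k2, \<pi>2) \<in> alignments m v" and o2: "opt_score S m v = align_score S m v (k2, \<pi>2)"
    by (rule opt_score_attained[OF m])
  define \<pi> where "\<pi> = (\<lambda>j i. if i < k1 then \<pi>1 j i else length (u j) + \<pi>2 j (i - k1))"
  have a: "(k1 + k2, \<pi>) \<in> alignments m (\<lambda>j. u j @ v j)"
    unfolding \<pi>_def by (rule alignments_append[OF a1 a2])
  have "align_score S m (\<lambda>j. u j @ v j) (k1 + k2, \<pi>) =
      (\<Sum>i<k1. S (map (\<lambda>j. (u j @ v j) ! \<pi> j i) [0..<m])) +
      (\<Sum>i<k2. S (map (\<lambda>j. (u j @ v j) ! \<pi> j (k1 + i)) [0..<m]))"
    unfolding align_score_def fst_conv snd_conv by (rule sum_lessThan_add)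
  also have "(\<Sum>i<k1. S (map (\<lambda>j. (u j @ v j) ! \<pi> j i) [0..<m])) = align_score S m u (k1, \<pi>1)"
    using a1 unfolding align_score_def \<pi>_def alignments_def
    by (auto intro!: sum.cong arg_cong[where f=S] map_cong simp: nth_append)
  also have "(\<Sum>i<k2. S (map (\<lambda>j. (u j @ v j) ! \<pi> j (k1 + i)) [0..<m])) = align_score S m v (k2, \<pi>2)"
    unfolding align_score_def \<pi>_def
    by (auto intro!: sum.cong arg_cong[where f=S] map_cong simp: nth_append)
  finally show ?thesis using o1 o2 align_score_le_opt_score[OF m a, of S] by simp
qed

lemma alignment_truncate:
  assumes a: "(k, \<pi>) \<in> alignments m w'"
    and ext: "\<And>j. j < m \<Longrightarrow> w' j = w j @ e j" and short: "\<And>j. j < m \<Longrightarrow> length (e j) \<le> d"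
  obtains k0 where "k0 \<le> k" "k \<le> k0 + d" "(k0, \<pi>) \<in> alignments m w"
proof -
  have sm: "strict_mono_on {..<k} (\<pi> j)" and vl: "\<And>i. i < k \<Longrightarrow> \<pi> j i < length (w' j)" if "j < m" for j
    using a that unfolding alignments_def by auto
  define leaves where "leaves i \<longleftrightarrow> i = k \<or> (i < k \<and> (\<exists>j<m. length (w j) \<le> \<pi> j i))" for i
  define k0 where "k0 = (LEAST i. leaves i)"
  have "leaves k0" unfolding k0_def by (rule LeastI[of leaves k]) (simp add: leaves_def)
  have "k0 \<le> k" unfolding k0_def by (rule Least_le) (simp add: leaves_def)
  have inside: "\<pi> j i < length (w j)" if "i < k0" "j < m" for i j
  proof -
    have "\<not> leaves i" using that(1) unfolding k0_def by (rule not_less_Least)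
    then show ?thesis using that \<open>k0 \<le> k\<close> unfolding leaves_def by auto
  qed
  \<comment> \<open>Column \<open>k0\<close> and all later ones use a letter of \<open>e j\<close> in some word \<open>j\<close>.\<close>
  have "k \<le> k0 + d"
  proof (cases "k0 = k")
    case False
    then obtain j where j: "j < m" "length (w j) \<le> \<pi> j k0" and "k0 < k"
      using \<open>leaves k0\<close> \<open>k0 \<le> k\<close> unfolding leaves_def by auto
    have "\<pi> j ` {k0..<k} \<subseteq> {length (w j)..<length (w' j)}"
    proof
      fix y assume "y \<in> \<pi> j ` {k0..<k}"
      then obtain i where i: "k0 \<le> i" "i < k" "y = \<pi> j i" by auto
      have "\<pi> j k0 \<le> \<pi> j i" using strict_mono_on_leD[OF sm[OF j(1)], of k0 i] i \<open>k0 < k\<close> by auto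
      then show "y \<in> {length (w j)..<length (w' j)}" using j vl[OF j(1) i(2)] i by auto
    qed
    moreover have "inj_on (\<pi> j) {k0..<k}"
      using strict_mono_on_imp_inj_on[OF sm[OF j(1)]] by (rule inj_on_subset) auto
    ultimately have "card {k0..<k} \<le> card {length (w j)..<length (w' j)}"
      by (intro card_inj_on_le) auto
    then show ?thesis using ext[OF j(1)] short[OF j(1)] by simp
  qed simp
  moreover have "(k0, \<pi>) \<in> alignments m w" unfolding alignments_def
    using inside sm \<open>k0 \<le> k\<close> by (auto intro: monotone_on_subset)
  ultimately show ?thesis using that \<open>k0 \<le> k\<close> by blast
qed

lemma opt_score_append_le:
  assumes m: "0 < m" and B: "0 \<le> B" and S_le: "\<And>x. length x = m \<Longrightarrow> set x \<subseteq> A \<Longrightarrow> S x \<le> B"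
    and wA: "\<And>j. j < m \<Longrightarrow> set (w' j) \<subseteq> A"
    and ext: "\<And>j. j < m \<Longrightarrow> w' j = w j @ e j" and short: "\<And>j. j < m \<Longrightarrow> length (e j) \<le> d"
  shows "opt_score S m w' \<le> opt_score S m w + real d * B"
proof -
  obtain k \<pi> where a: "(k, \<pi>) \<in> alignments m w'" and opt: "opt_score S m w' = align_score S m w' (k, \<pi>)"
    by (rule opt_score_attained[OF m])
  obtain k0 where "k0 \<le> k" "k \<le> k0 + d" and a0: "(k0, \<pi>) \<in> alignments m w"
    using alignment_truncate[OF a ext short] .
  define c where "c i = S (map (\<lambda>j. w' j ! \<pi> j i) [0..<m])" for i
  have "align_score S m w' (k, \<pi>) = (\<Sum>i<k. c i)"
    unfolding align_score_def c_def by simp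
  also have "\<dots> = (\<Sum>i<k0. c i) + (\<Sum>i\<in>{k0..<k}. c i)"
    using sum.atLeastLessThan_concat[of 0 k0 k c] \<open>k0 \<le> k\<close> by (simp add: atLeast0LessThan)
  moreover have "(\<Sum>i<k0. c i) = align_score S m w (k0, \<pi>)"
    using a0 ext unfolding align_score_def c_def alignments_def
    by (auto intro!: sum.cong arg_cong[where f=S] map_cong simp: nth_append)
  moreover have "(\<Sum>i\<in>{k0..<k}. c i) \<le> (\<Sum>i\<in>{k0..<k}. B)"
    unfolding c_def by (intro sum_mono S_le alignment_column_subset[OF a wA]) auto
  moreover have "(\<Sum>i\<in>{k0..<k}. B) \<le> real d * B"
    using \<open>k \<le> k0 + d\<close> B by (simp add: mult_right_mono)
  ultimately show ?thesis
    using opt align_score_le_opt_score[OF m a0, of S] by linarith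
qed

lemma opt_score_permute:
  assumes m: "0 < m" and wA: "\<And>j. j < m \<Longrightarrow> set (w j) \<subseteq> A"
    and S_sym: "\<And>x y. length x = m \<Longrightarrow> set x \<subseteq> A \<Longrightarrow> mset y = mset x \<Longrightarrow> S y = S x"
    and \<sigma>: "bij_betw \<sigma> {..<m} {..<m}"
  shows "opt_score S m w \<le> opt_score S m (\<lambda>j. w (\<sigma> j))"
proof -
  obtain k \<pi> where a: "(k, \<pi>) \<in> alignments m w" and opt: "opt_score S m w = align_score S m w (k, \<pi>)"
    by (rule opt_score_attained[OF m])
  have a': "(k, \<lambda>j. \<pi> (\<sigma> j)) \<in> alignments m (\<lambda>j. w (\<sigma> j))"
    using a bij_betwE[OF \<sigma>] unfolding alignments_def by auto
  have "distinct (map \<sigma> [0..<m])" "set (map \<sigma> [0..<m]) = set [0..<m]"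
    using \<sigma> by (simp_all add: lessThan_atLeast0 bij_betw_def distinct_map)
  then have perm: "mset (map \<sigma> [0..<m]) = mset [0..<m]"
    by (metis set_eq_iff_mset_eq_distinct distinct_upt)
  have "mset (map (\<lambda>j. w (\<sigma> j) ! \<pi> (\<sigma> j) i) [0..<m]) = mset (map (\<lambda>j. w j ! \<pi> j i) [0..<m])" for i
  proof -
    have "map (\<lambda>j. w (\<sigma> j) ! \<pi> (\<sigma> j) i) [0..<m] = map (\<lambda>j. w j ! \<pi> j i) (map \<sigma> [0..<m])" by simp
    then show ?thesis using perm by (simp only: mset_map)
  qed
  then have "align_score S m (\<lambda>j. w (\<sigma> j)) (k, \<lambda>j. \<pi> (\<sigma> j)) = align_score S m w (k, \<pi>)"
    unfolding align_score_def fst_conv snd_conv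
    by (intro sum.cong refl S_sym alignment_column_subset[OF a wA]) auto
  then show ?thesis using opt align_score_le_opt_score[OF m a', of S] by simp
qed

lemma opt_score_rotate:
  assumes m: "0 < m" and wA: "\<And>j. j < m \<Longrightarrow> set (w j) \<subseteq> A"
    and S_sym: "\<And>x y. length x = m \<Longrightarrow> set x \<subseteq> A \<Longrightarrow> mset y = mset x \<Longrightarrow> S y = S x"
  shows "opt_score S m (\<lambda>j. w ((j + 1) mod m)) = opt_score S m w"
proof (rule antisym)
  show "opt_score S m w \<le> opt_score S m (\<lambda>j. w ((j + 1) mod m))"
    using opt_score_permute[OF m wA S_sym bij_betw_rotate[OF m, of 1]] by (simp add: add.commute)
  have "opt_score S m (\<lambda>j. w ((j + 1) mod m)) \<le> opt_score S m (\<lambda>j. w (((m - 1 + j) mod m + 1) mod m))"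
    by (rule opt_score_permute[OF m _ S_sym bij_betw_rotate[OF m, of "m - 1"]])
      (use wA[OF mod_less_divisor[OF m]] in simp)
  also have "\<dots> = opt_score S m w"
  proof (rule opt_score_cong)
    fix j assume "j < m"
    have "((m - 1 + j) mod m + 1) mod m = (m - 1 + j + 1) mod m" by (rule mod_add_left_eq)
    also have "m - 1 + j + 1 = j + m" using m by simp
    finally have "((m - 1 + j) mod m + 1) mod m = j" using \<open>j < m\<close> by simp
    then show "w (((m - 1 + j) mod m + 1) mod m) = w j" by simp
  qed
  finally show "opt_score S m (\<lambda>j. w ((j + 1) mod m)) \<le> opt_score S m w" .
qed

section \<open>Expected scores of i.i.d. words\<close>

locale iid_letters = prob_space M for M :: "'a measure" +
  fixes X :: "nat \<Rightarrow> nat \<Rightarrow> 'a \<Rightarrow> real" and A :: "real set" and m :: nat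
  assumes indep: "indep_vars (\<lambda>_. borel) (\<lambda>(j, i). X j i) ({..<m} \<times> UNIV)"
    and ident: "\<And>j i. j < m \<Longrightarrow> distr M borel (X j i) = distr M borel (X 0 0)"
    and vals: "\<And>j i \<omega>. j < m \<Longrightarrow> \<omega> \<in> space M \<Longrightarrow> X j i \<omega> \<in> A"
    and finite_A: "finite A"
begin

definition letter_prob :: "real \<Rightarrow> real"
  where "letter_prob c = measure (distr M borel (X 0 0)) {c}"

lemma X_measurable: "j < m \<Longrightarrow> X j i \<in> borel_measurable M"
  using indep unfolding indep_vars_def2 by force

lemma prob_X_eq:
  assumes "j < m"
  shows "prob (X j i -` {c} \<inter> space M) = letter_prob c"
proof -
  have "letter_prob c = measure (distr M borel (X j i)) {c}"
    unfolding letter_prob_def using ident[OF assms] by simp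
  also have "\<dots> = prob (X j i -` {c} \<inter> space M)"
    by (rule measure_distr[OF X_measurable[OF assms]]) simp
  finally show ?thesis by simp
qed

definition letters_event :: "('b \<Rightarrow> nat \<times> nat) \<Rightarrow> 'b set \<Rightarrow> ('b \<Rightarrow> real) \<Rightarrow> 'a set"
  where "letters_event \<tau> P a = {\<omega> \<in> space M. \<forall>p\<in>P. X (fst (\<tau> p)) (snd (\<tau> p)) \<omega> = a p}"

lemma letters_event_in_events:
  assumes P: "finite P" and \<tau>: "\<tau> ` P \<subseteq> {..<m} \<times> UNIV"
  shows "letters_event \<tau> P a \<in> events"
  unfolding letters_event_def
proof (intro sets.sets_Collect_finite_All P)
  fix p assume "p \<in> P"
  then have "fst (\<tau> p) < m" using \<tau> by force
  have "{\<omega> \<in> space M. X (fst (\<tau> p)) (snd (\<tau> p)) \<omega> = a p} = X (fst (\<tau> p)) (snd (\<tau> p)) -` {a p} \<inter> space M"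
    by auto
  also have "\<dots> \<in> events"
    using X_measurable[OF \<open>fst (\<tau> p) < m\<close>] by (intro measurable_sets) auto
  finally show "{\<omega> \<in> space M. X (fst (\<tau> p)) (snd (\<tau> p)) \<omega> = a p} \<in> events" .
qed

lemma prob_letters_event:
  assumes P: "finite P" and inj: "inj_on \<tau> P" and \<tau>: "\<tau> ` P \<subseteq> {..<m} \<times> UNIV"
  shows "prob (letters_event \<tau> P a) = (\<Prod>p\<in>P. letter_prob (a p))"
proof (cases "P = {}")
  case True
  then show ?thesis by (simp add: letters_event_def prob_space)
next
  case False
  define F where "F q = X (fst q) (snd q) -` {a (the_inv_into P \<tau> q)} \<inter> space M" for q
  have "letters_event \<tau> P a = (\<Inter>q\<in>\<tau> ` P. F q)"
    using False unfolding letters_event_def F_def by (auto simp: the_inv_into_f_f[OF inj])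
  also have "prob \<dots> = (\<Prod>q\<in>\<tau> ` P. prob (F q))"
  proof (rule indep_setsD[OF indep[unfolded indep_vars_def2, THEN conjunct2] \<tau>])
    show "\<tau> ` P \<noteq> {}" "finite (\<tau> ` P)" using False P by auto
    show "\<forall>q\<in>\<tau> ` P. F q \<in> {(\<lambda>(j, i). X j i) q -` B \<inter> space M | B. B \<in> sets borel}"
      unfolding F_def by (auto simp: case_prod_beta)
  qed
  also have "\<dots> = (\<Prod>p\<in>P. prob (F (\<tau> p)))" by (rule prod.reindex[OF inj, unfolded comp_def])
  also have "\<dots> = (\<Prod>p\<in>P. letter_prob (a p))"
    using \<tau> by (intro prod.cong refl) (auto simp: F_def the_inv_into_f_f[OF inj] intro!: prob_X_eq)
  finally show ?thesis .
qed

lemma fun_letters_eq_sum_indicator: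
  fixes g :: "('b \<Rightarrow> real) \<Rightarrow> real"
  assumes P: "finite P" and \<tau>: "\<tau> ` P \<subseteq> {..<m} \<times> UNIV" and \<omega>: "\<omega> \<in> space M"
  shows "g (\<lambda>p\<in>P. X (fst (\<tau> p)) (snd (\<tau> p)) \<omega>)
    = (\<Sum>a\<in>PiE P (\<lambda>_. A). g a * indicator (letters_event \<tau> P a) \<omega>)"
proof -
  define a0 where "a0 = (\<lambda>p\<in>P. X (fst (\<tau> p)) (snd (\<tau> p)) \<omega>)"
  have "a0 \<in> PiE P (\<lambda>_. A)" unfolding a0_def using \<tau> vals[OF _ \<omega>] by force
  moreover have "\<omega> \<in> letters_event \<tau> P a \<longleftrightarrow> a = a0" if "a \<in> PiE P (\<lambda>_. A)" for a
    using that \<omega> unfolding letters_event_def a0_def by (auto simp: PiE_iff extensional_def fun_eq_iff)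
  ultimately have "(\<Sum>a\<in>PiE P (\<lambda>_. A). g a * indicator (letters_event \<tau> P a) \<omega>)
      = (\<Sum>a\<in>PiE P (\<lambda>_. A). if a = a0 then g a else 0)"
    by (intro sum.cong) (auto simp: indicator_def)
  also have "\<dots> = g a0" using \<open>a0 \<in> PiE P (\<lambda>_. A)\<close> P finite_A by (simp add: sum.delta finite_PiE)
  finally show ?thesis unfolding a0_def by simp
qed

lemma integral_fun_letters:
  fixes \<tau> :: "'b \<Rightarrow> nat \<times> nat" and g :: "('b \<Rightarrow> real) \<Rightarrow> real"
  assumes P: "finite P" and inj: "inj_on \<tau> P" and \<tau>: "\<tau> ` P \<subseteq> {..<m} \<times> UNIV"
  shows "integrable M (\<lambda>\<omega>. g (\<lambda>p\<in>P. X (fst (\<tau> p)) (snd (\<tau> p)) \<omega>))"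
    and "expectation (\<lambda>\<omega>. g (\<lambda>p\<in>P. X (fst (\<tau> p)) (snd (\<tau> p)) \<omega>)) =
          (\<Sum>a\<in>PiE P (\<lambda>_. A). g a * (\<Prod>p\<in>P. letter_prob (a p)))"
proof -
  let ?simple = "\<lambda>\<omega>. \<Sum>a\<in>PiE P (\<lambda>_. A). g a * indicator (letters_event \<tau> P a) \<omega>"
  have ind: "integrable M (indicator (letters_event \<tau> P a) :: 'a \<Rightarrow> real)" for a
    using letters_event_in_events[OF P \<tau>] by (intro integrable_real_indicator) (auto simp: less_top[symmetric])
  have "integrable M ?simple"
    by (intro Bochner_Integration.integrable_sum integrable_mult_right ind)
  then show "integrable M (\<lambda>\<omega>. g (\<lambda>p\<in>P. X (fst (\<tau> p)) (snd (\<tau> p)) \<omega>))"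
    by (rule Bochner_Integration.integrable_cong[THEN iffD1, rotated 2])
      (auto simp: fun_letters_eq_sum_indicator[OF P \<tau>])
  have "expectation (\<lambda>\<omega>. g (\<lambda>p\<in>P. X (fst (\<tau> p)) (snd (\<tau> p)) \<omega>)) = expectation ?simple"
    by (rule Bochner_Integration.integral_cong) (auto simp: fun_letters_eq_sum_indicator[OF P \<tau>])
  also have "\<dots> = (\<Sum>a\<in>PiE P (\<lambda>_. A). g a * prob (letters_event \<tau> P a))"
    using letters_event_in_events[OF P \<tau>] by (subst Bochner_Integration.integral_sum) (auto intro: ind)
  finally show "expectation (\<lambda>\<omega>. g (\<lambda>p\<in>P. X (fst (\<tau> p)) (snd (\<tau> p)) \<omega>)) =
      (\<Sum>a\<in>PiE P (\<lambda>_. A). g a * (\<Prod>p\<in>P. letter_prob (a p)))"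
    by (simp add: prob_letters_event[OF P inj \<tau>])
qed

abbreviation words :: "(nat \<Rightarrow> nat) \<Rightarrow> 'a \<Rightarrow> nat \<Rightarrow> real list"
  where "words l \<omega> \<equiv> \<lambda>j. map (\<lambda>i. X j i \<omega>) [0..<l j]"

definition expected_score :: "(real list \<Rightarrow> real) \<Rightarrow> (nat \<Rightarrow> nat) \<Rightarrow> real"
  where "expected_score S l = expectation (\<lambda>\<omega>. opt_score S m (words l \<omega>))"

\<comment> \<open>Reading the letters from other (distinct) positions does not change the law of the score.\<close>
lemma expected_score_reindex:
  fixes \<tau> :: "nat \<times> nat \<Rightarrow> nat \<times> nat"
  assumes inj: "inj_on \<tau> (SIGMA j:{..<m}. {..<l j})" and \<tau>: "\<tau> ` (SIGMA j:{..<m}. {..<l j}) \<subseteq> {..<m} \<times> UNIV"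
  shows "integrable M (\<lambda>\<omega>. opt_score S m (\<lambda>j. map (\<lambda>i. X (fst (\<tau> (j, i))) (snd (\<tau> (j, i))) \<omega>) [0..<l j]))"
    and "expectation (\<lambda>\<omega>. opt_score S m (\<lambda>j. map (\<lambda>i. X (fst (\<tau> (j, i))) (snd (\<tau> (j, i))) \<omega>) [0..<l j]))
      = expected_score S l"
proof -
  define P where "P = (SIGMA j:{..<m}. {..<l j})"
  define g where "g a = opt_score S m (\<lambda>j. map (\<lambda>i. a (j, i)) [0..<l j])" for a :: "nat \<times> nat \<Rightarrow> real"
  have P: "finite P" unfolding P_def by auto
  have read: "opt_score S m (\<lambda>j. map (\<lambda>i. X (fst (\<sigma> (j, i))) (snd (\<sigma> (j, i))) \<omega>) [0..<l j])
      = g (\<lambda>p\<in>P. X (fst (\<sigma> p)) (snd (\<sigma> p)) \<omega>)" for \<sigma> :: "nat \<times> nat \<Rightarrow> nat \<times> nat" and \<omega>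
    unfolding g_def by (rule opt_score_cong) (auto simp: P_def)
  show "integrable M (\<lambda>\<omega>. opt_score S m (\<lambda>j. map (\<lambda>i. X (fst (\<tau> (j, i))) (snd (\<tau> (j, i))) \<omega>) [0..<l j]))"
    unfolding read using integral_fun_letters(1)[OF P inj[folded P_def] \<tau>[folded P_def]] .
  have "expectation (\<lambda>\<omega>. opt_score S m (\<lambda>j. map (\<lambda>i. X (fst (\<tau> (j, i))) (snd (\<tau> (j, i))) \<omega>) [0..<l j]))
      = (\<Sum>a\<in>PiE P (\<lambda>_. A). g a * (\<Prod>p\<in>P. letter_prob (a p)))"
    unfolding read using integral_fun_letters(2)[OF P inj[folded P_def] \<tau>[folded P_def]] .
  also have "\<dots> = expected_score S l"
  proof -
    have "inj_on id P" "id ` P \<subseteq> {..<m} \<times> UNIV" unfolding P_def by auto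
    then show ?thesis
      using integral_fun_letters(2)[OF P, of id g] read[of id] by (simp add: expected_score_def)
  qed
  finally show "expectation (\<lambda>\<omega>. opt_score S m (\<lambda>j. map (\<lambda>i. X (fst (\<tau> (j, i))) (snd (\<tau> (j, i))) \<omega>) [0..<l j]))
      = expected_score S l" .
qed

lemma integrable_opt_score: "integrable M (\<lambda>\<omega>. opt_score S m (words l \<omega>))"
  using expected_score_reindex(1)[of id l S] by fastforce

lemma expected_score_shift:
  shows "integrable M (\<lambda>\<omega>. opt_score S m (\<lambda>j. map (\<lambda>i. X j (s j + i) \<omega>) [0..<l j]))"
    and "expectation (\<lambda>\<omega>. opt_score S m (\<lambda>j. map (\<lambda>i. X j (s j + i) \<omega>) [0..<l j])) = expected_score S l"
proof -
  have "inj_on (\<lambda>(j, i). (j, s j + i)) (SIGMA j:{..<m}. {..<l j})" by (auto simp: inj_on_def)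
  moreover have "(\<lambda>(j, i). (j, s j + i)) ` (SIGMA j:{..<m}. {..<l j}) \<subseteq> {..<m} \<times> UNIV" by auto
  ultimately show "integrable M (\<lambda>\<omega>. opt_score S m (\<lambda>j. map (\<lambda>i. X j (s j + i) \<omega>) [0..<l j]))"
    and "expectation (\<lambda>\<omega>. opt_score S m (\<lambda>j. map (\<lambda>i. X j (s j + i) \<omega>) [0..<l j])) = expected_score S l"
    using expected_score_reindex[of "\<lambda>(j, i). (j, s j + i)" l S] by simp_all
qed

lemma expected_score_rotate_rows:
  assumes "0 < m"
  shows "expectation (\<lambda>\<omega>. opt_score S m (\<lambda>j. map (\<lambda>i. X ((j + 1) mod m) i \<omega>) [0..<l j])) = expected_score S l"
proof -
  have "inj_on (\<lambda>j. (j + 1) mod m) {..<m}"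
    using bij_betw_imp_inj_on[OF bij_betw_rotate[OF assms, of 1]] by (simp add: add.commute)
  moreover have "inj_on (\<lambda>(j, i). (f j, i)) (SIGMA j:J. I j)" if "inj_on f J" for f :: "nat \<Rightarrow> nat" and J I
    using that by (auto simp: inj_on_def)
  ultimately have "inj_on (\<lambda>(j, i). ((j + 1) mod m, i)) (SIGMA j:{..<m}. {..<l j})"
    by blast
  moreover have "(\<lambda>(j, i). ((j + 1) mod m, i)) ` (SIGMA j:{..<m}. {..<l j}) \<subseteq> {..<m} \<times> UNIV"
    using assms by auto
  ultimately show ?thesis
    using expected_score_reindex(2)[of "\<lambda>(j, i). ((j + 1) mod m, i)" l S] by simp
qed

end

locale iid_alignment = iid_letters +
  fixes S :: "real list \<Rightarrow> real" and B :: real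
  assumes m_pos: "0 < m" and B_nonneg: "0 \<le> B"
    and S_le: "\<And>x. length x = m \<Longrightarrow> set x \<subseteq> A \<Longrightarrow> S x \<le> B"
    and S_sym: "\<And>x y. length x = m \<Longrightarrow> set x \<subseteq> A \<Longrightarrow> mset y = mset x \<Longrightarrow> S y = S x"
begin

lemma words_subset: "\<omega> \<in> space M \<Longrightarrow> j < m \<Longrightarrow> set (words l \<omega> j) \<subseteq> A"
  using vals by auto

lemma words_add: "words (\<lambda>j. l j + l' j) \<omega> j = words l \<omega> j @ map (\<lambda>i. X j (l j + i) \<omega>) [0..<l' j]"
  by (simp add: map_upt_add)

lemma expected_score_superadd:
  "expected_score S l + expected_score S l' \<le> expected_score S (\<lambda>j. l j + l' j)"
proof -
  let ?tail = "\<lambda>\<omega>. opt_score S m (\<lambda>j. map (\<lambda>i. X j (l j + i) \<omega>) [0..<l' j])"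
  have "expected_score S l + expected_score S l'
      = expectation (\<lambda>\<omega>. opt_score S m (words l \<omega>) + ?tail \<omega>)"
    using integrable_opt_score expected_score_shift[where S = S and s = l and l = l']
    by (simp add: expected_score_def Bochner_Integration.integral_add)
  also have "\<dots> \<le> expected_score S (\<lambda>j. l j + l' j)"
    unfolding expected_score_def
    by (intro Bochner_Integration.integral_mono Bochner_Integration.integrable_add integrable_opt_score
        expected_score_shift(1))
      (simp add: words_add opt_score_append_superadd[OF m_pos])
  finally show ?thesis .
qed

lemma expected_score_extend_le:
  assumes "\<And>j. j < m \<Longrightarrow> l' j \<le> l j + d"
  shows "expected_score S l' \<le> expected_score S l + real d * B"
proof -
  define l2 where "l2 j = max (l j) (l' j)" for j
  have "opt_score S m (words l' \<omega>) \<le> opt_score S m (words l \<omega>) + real d * B" if "\<omega> \<in> space M" for \<omega>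
  proof -
    have "opt_score S m (words l' \<omega>) \<le> opt_score S m (words l2 \<omega>)"
      using words_add[where l = l' and l' = "\<lambda>j. l2 j - l' j"]
      by (intro opt_score_mono_append[OF m_pos]) (simp add: l2_def)
    also have "\<dots> \<le> opt_score S m (words l \<omega>) + real d * B"
      using words_add[where l = l and l' = "\<lambda>j. l2 j - l j"] assms
      by (intro opt_score_append_le[OF m_pos B_nonneg S_le words_subset[OF that]])
        (auto simp: l2_def dest: assms)
    finally show ?thesis .
  qed
  then have "expected_score S l' \<le> expectation (\<lambda>\<omega>. opt_score S m (words l \<omega>) + real d * B)"
    unfolding expected_score_def
    by (intro Bochner_Integration.integral_mono integrable_opt_score Bochner_Integration.integrable_add) auto
  also have "\<dots> = expected_score S l + real d * B"
    unfolding expected_score_def using integrable_opt_score by (simp add: prob_space)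
  finally show ?thesis .
qed

lemma expected_score_le_first: "expected_score S l \<le> B * real (l 0)"
proof -
  have "expected_score S l \<le> expectation (\<lambda>_. B * real (l 0))"
    unfolding expected_score_def
    using opt_score_le_length[OF m_pos B_nonneg S_le words_subset]
    by (intro Bochner_Integration.integral_mono integrable_opt_score) auto
  then show ?thesis by (simp add: prob_space)
qed

lemma expected_score_rotate: "expected_score S (\<lambda>j. l ((j + 1) mod m)) = expected_score S l"
proof -
  have "expected_score S (\<lambda>j. l ((j + 1) mod m))
      = expectation (\<lambda>\<omega>. opt_score S m (\<lambda>j. words l \<omega> ((j + 1) mod m)))"
    using expected_score_rotate_rows[OF m_pos, of S "\<lambda>j. l ((j + 1) mod m)"] by simp
  also have "\<dots> = expected_score S l"
    unfolding expected_score_def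
    by (intro Bochner_Integration.integral_cong refl opt_score_rotate[OF m_pos words_subset S_sym])
  finally show ?thesis .
qed

sublocale length_functional m "expected_score S" B
proof
  show "expected_score S l = expected_score S l'" if "\<And>j. j < m \<Longrightarrow> l j = l' j" for l l'
    unfolding expected_score_def using that by (simp cong: opt_score_cong)
  show "0 \<le> expected_score S l" for l
    unfolding expected_score_def by (intro Bochner_Integration.integral_nonneg opt_score_nonneg[OF m_pos])
qed (use m_pos B_nonneg expected_score_superadd expected_score_extend_le expected_score_le_first
       expected_score_rotate in auto)

end

theorem proposition3p1:
  fixes M :: "'a measure" and X :: "nat \<Rightarrow> nat \<Rightarrow> 'a \<Rightarrow> real"
    and A :: "real set" and S :: "real list \<Rightarrow> real" and m :: nat and D :: real
  assumes "m \<ge> 2"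
    and "finite A"
    and "prob_space M"
    and indep: "prob_space.indep_vars M (\<lambda>_. borel) (\<lambda>(j, i). X j i) ({..<m} \<times> UNIV)"
    and ident: "\<And>j i. j < m \<Longrightarrow> distr M borel (X j i) = distr M borel (X 0 0)"
    and vals: "\<And>j i \<omega>. j < m \<Longrightarrow> \<omega> \<in> space M \<Longrightarrow> X j i \<omega> \<in> A"
    and S_nonneg: "\<And>x. length x = m \<Longrightarrow> set x \<subseteq> A \<Longrightarrow> S x \<ge> 0"
    and S_nonzero: "\<exists>x. length x = m \<and> set x \<subseteq> A \<and> S x \<noteq> 0"
    and S_sym: "\<And>x y. length x = m \<Longrightarrow> set x \<subseteq> A \<Longrightarrow> mset y = mset x \<Longrightarrow> S y = S x"
    and S_bdd: "bdd_above (S ` {x. length x = m \<and> set x \<subseteq> A})"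
    and "D > 0"
    and S_lip: "\<And>x y. length x = m \<Longrightarrow> length y = m \<Longrightarrow> set x \<subseteq> A \<Longrightarrow> set y \<subseteq> A
                 \<Longrightarrow> card {j. j < m \<and> x ! j \<noteq> y ! j} \<le> 1 \<Longrightarrow> \<bar>S x - S y\<bar> \<le> D"
  shows "(\<forall>q\<in>Qdom m. \<forall>r\<in>Qdom m. \<forall>t\<in>{0..1}.
            t * gamma_tilde M X S m q + (1 - t) * gamma_tilde M X S m r
              \<le> gamma_tilde M X S m (\<lambda>j. t * q j + (1 - t) * r j))
       \<and> (\<forall>q\<in>Qdom m. gamma_tilde M X S m q \<le> gamma_tilde M X S m (\<lambda>_. 1))"
proof -
  obtain B0 where B0: "\<And>x. length x = m \<Longrightarrow> set x \<subseteq> A \<Longrightarrow> S x \<le> B0"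
    using S_bdd unfolding bdd_above_def by blast
  have S_le: "S x \<le> max B0 0" if "length x = m" "set x \<subseteq> A" for x
    using B0[OF that] by linarith
  interpret iid_alignment M X A m S "max B0 0"
  proof (intro iid_alignment.intro iid_letters.intro iid_letters_axioms.intro iid_alignment_axioms.intro)
    show "0 < m" using \<open>m \<ge> 2\<close> by simp
  qed (fact assms(2,3) indep ident vals S_le S_sym | simp)+
  have gamma: "gamma_tilde M X S m q = rate q" for q
    unfolding gamma_tilde_def rate_def F_ceil_def expected_score_def ..
  have Q: "nonneg q" "(\<Sum>j<m. q j) = real m" if "q \<in> Qdom m" for q
    using that by (auto simp: Qdom_def nonneg_def less_imp_le)
  show ?thesis
    unfolding gamma using rate_concave rate_le_rate_one Q by simp
qed

end
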